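(* Let $\{A_{1C},\dots,A_{qC}\}$ be a $PComS(n,q,c)$. Then $$\sum_{i=1}^{q}l(A_i)=\frac{nq-c}{2},\qquad \sum_{i=1}^{q}\mathcal{N}_{A_i}(R_1)=\frac{nq-c}{4},$$ and for every $k$ with $2\le k\le n-2$, $$\sum_{i=1}^{q}\mathcal{N}_{A_i}(R_k)=\sum_{i=1}^{q}\ \sum_{\substack{i_1+\cdots+i_r=k\\ 1<r\le k}}(-1)^{r}\,\mathcal{N}_{A_i}(R_{i_1}\cdots R_{i_r}),$$ where the inner sum runs over all compositions $(i_1,\dots,i_r)$ of $k$ with $r\ge2$ parts.
   Context: Sequences $X=(x_0,\dots,x_{n-1})\in\mathbb{Z}_2^n$ have entries in $\{+1,-1\}$ and are regarded as periodic (indices mod $n$). The periodic autocorrelation is $\mathsf{P}_X(k)=\sum_{i=0}^{n-1}x_ix_{i+k}$; it depends only on the cyclic-shift class $X_C$. A $PComS(n,q,c)$ is a list (repetitions allowed) of $q$ cyclic-shift classes $A_{1C},\dots,A_{qC}$ with $A_i\in\mathbb{Z}_2^n$ such that $\sum_{i=1}^q\mathsf{P}_{A_i}(k)=c$ for all $1\le k\le n-1$. A run of $X$ is a maximal block of cyclically consecutive equal entries; $l(X)=\#\{i:x_i\ne x_{i+1\bmod n}\}$ is the number of runs ($0$ for constant $X$). For positive integers $i_1,\dots,i_r$, a run string of type $R_{i_1}\cdots R_{i_r}$ is a sequence of $r$ cyclically consecutive runs of lengths $i_1,\dots,i_r$ in this order, and $\mathcal{N}_X(R_{i_1}\cdots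 R_{i_r})$ is the number of such run strings in $X$ (counted by starting run); these quantities depend only on the class $X_C$. *)

theory Defs
  imports Complex_Main
begin

text \<open>A sequence in Z_2^n is represented by a function X :: nat => int whose entries
  X 0, ..., X (n-1) are +1 or -1; indices are taken mod n.  All quantities below
  are invariant under cyclic shift, so a cyclic-shift class is represented by any
  representative.\<close>

definition pm1_seq :: "nat \<Rightarrow> (nat \<Rightarrow> int) \<Rightarrow> bool" where
  "pm1_seq n X \<longleftrightarrow> (\<forall>i<n. X i = 1 \<or> X i = -1)"

definition paut :: "nat \<Rightarrow> (nat \<Rightarrow> int) \<Rightarrow> nat \<Rightarrow> int" where
  "paut n X k = (\<Sum>i<n. X i * X ((i + k) mod n))"

text \<open>PComS(n,q,c): the q sequences A 1, ..., A q (repetitions allowed).\<close>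
definition is_PComS :: "nat \<Rightarrow> nat \<Rightarrow> int \<Rightarrow> (nat \<Rightarrow> nat \<Rightarrow> int) \<Rightarrow> bool" where
  "is_PComS n q c A \<longleftrightarrow>
     (\<forall>i\<in>{1..q}. pm1_seq n (A i)) \<and>
     (\<forall>k\<in>{1..n-1}. (\<Sum>i=1..q. paut n (A i) k) = c)"

definition nruns :: "nat \<Rightarrow> (nat \<Rightarrow> int) \<Rightarrow> nat" where
  "nruns n X = card {i. i < n \<and> X i \<noteq> X ((i + 1) mod n)}"

definition run_starts :: "nat \<Rightarrow> (nat \<Rightarrow> int) \<Rightarrow> nat list" where
  "run_starts n X = sorted_list_of_set {i. i < n \<and> X ((i + n - 1) mod n) \<noteq> X i}"

definition run_len :: "nat \<Rightarrow> (nat \<Rightarrow> int) \<Rightarrow> nat \<Rightarrow> nat" where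
  "run_len n X j = (let s = run_starts n X; m = length s in
      ((s ! ((j + 1) mod m) + n - s ! j - 1) mod n) + 1)"

text \<open>N_X(R_{i_1} ... R_{i_r}): number of starting runs j such that the runs
  j, j+1, ..., j+r-1 (cyclically) have lengths i_1, ..., i_r.\<close>
definition run_count :: "nat \<Rightarrow> (nat \<Rightarrow> int) \<Rightarrow> nat list \<Rightarrow> nat" where
  "run_count n X rs = (let m = length (run_starts n X) in
     card {j. j < m \<and> (\<forall>t<length rs. run_len n X ((j + t) mod m) = rs ! t)})"

definition compositions_ge2 :: "nat \<Rightarrow> nat list set" where
  "compositions_ge2 k = {cs. (\<forall>x\<in>set cs. 0 < x) \<and> sum_list cs = k \<and>
                              2 \<le> length cs \<and> length cs \<le> k}"

end

theory Submission
  imports Defs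
begin

text \<open>
  Let x be the n-periodic extension of a \<plusminus>1 sequence X. The product
  (x_i - x_(i+1)) (x_(i+k) - x_(i+k+1)) vanishes unless runs start at both i+1 and i+k+1,
  and then it equals 4 x_(i+1) x_(i+k+1) = 4 (-1)^r, where r is the number of runs from the
  first of these starts to the second; the lengths of these r runs form a composition of k.
  Summing over one period therefore gives
  4 \<Sum> (-1)^r N_X(R_(i_1) ... R_(i_r)) = 2 P_X(k) - P_X(k+1) - P_X(k-1),
  the sum ranging over all compositions (i_1, ..., i_r) of k. Over a PComS the right-hand
  side adds up to c - nq for k = 1 and to 0 for 2 \<le> k \<le> n-2, and P_X(1) = n - 2 l(X).
\<close>

lemma sum_lessThan_periodic_shift:
  fixes g :: "nat \<Rightarrow> 'a::cancel_comm_monoid_add"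
  assumes periodic: "\<And>t. g (t + n) = g t"
  shows "(\<Sum>i<n. g (i + a)) = (\<Sum>i<n. g i)"
proof (induction a)
  case 0
  show ?case by simp
next
  case (Suc a)
  have "g a + (\<Sum>i<n. g (Suc i + a)) = (\<Sum>i<Suc n. g (i + a))"
    by (subst sum.lessThan_Suc_shift) simp
  also have "\<dots> = g a + (\<Sum>i<n. g (i + a))"
    using periodic[of a] by (simp add: add.commute)
  finally show ?case
    using Suc.IH by simp
qed

definition compositions :: "nat \<Rightarrow> nat list set" where
  "compositions k = {cs. (\<forall>x\<in>set cs. 0 < x) \<and> sum_list cs = k}"

lemma length_le_sum_list_pos:
  "\<forall>x\<in>set cs. 0 < x \<Longrightarrow> length cs \<le> sum_list (cs :: nat list)"
  by (induction cs) auto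

lemma finite_compositions: "finite (compositions k)"
proof (rule finite_subset)
  show "compositions k \<subseteq> {cs. set cs \<subseteq> {..k} \<and> length cs \<le> k}"
    unfolding compositions_def using length_le_sum_list_pos member_le_sum_list by fastforce
  show "finite {cs. set cs \<subseteq> {..k} \<and> length cs \<le> k}"
    by (rule finite_lists_length_le) simp
qed

lemma compositions_eq_insert_ge2:
  assumes "0 < k"
  shows "compositions k = insert [k] (compositions_ge2 k)"
proof (intro equalityI subsetI)
  fix cs assume cs: "cs \<in> compositions k"
  then have "cs \<noteq> []"
    using assms by (auto simp: compositions_def)
  then consider a where "cs = [a]" | "2 \<le> length cs"
    by (cases cs) (auto simp: Suc_le_eq)
  then show "cs \<in> insert [k] (compositions_ge2 k)"
  proof cases
    case 1
    then show ?thesis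
      using cs by (simp add: compositions_def)
  next
    case 2
    then show ?thesis
      using cs length_le_sum_list_pos[of cs] by (simp add: compositions_def compositions_ge2_def)
  qed
qed (use assms in \<open>auto simp: compositions_def compositions_ge2_def\<close>)

lemma compositions_1: "compositions 1 = {[1]}"
  by (auto simp: compositions_eq_insert_ge2 compositions_ge2_def)

lemma finite_compositions_ge2: "finite (compositions_ge2 k)"
  by (rule finite_subset[OF _ finite_compositions[of k]])
    (auto simp: compositions_def compositions_ge2_def)

lemma singleton_notin_compositions_ge2: "[k] \<notin> compositions_ge2 k"
  by (simp add: compositions_ge2_def)

lemma set_run_starts: "set (run_starts n X) = {i. i < n \<and> X ((i + n - 1) mod n) \<noteq> X i}"
  by (simp add: run_starts_def)

lemma sorted_run_starts: "sorted_wrt (<) (run_starts n X)"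
  by (simp add: run_starts_def)

lemma distinct_run_starts: "distinct (run_starts n X)"
  by (simp add: run_starts_def)

lemma run_starts_nth_less: "j < length (run_starts n X) \<Longrightarrow> run_starts n X ! j < n"
  using nth_mem set_run_starts by blast

lemma run_len_pos: "0 < run_len n X j"
  by (simp add: run_len_def Let_def)

locale periodic_sequence =
  fixes n :: nat and X :: "nat \<Rightarrow> int"
  assumes period_pos: "0 < n"
begin

abbreviation runs :: "nat list" where
  "runs \<equiv> run_starts n X"

definition x :: "nat \<Rightarrow> int" where
  "x t = X (t mod n)"

text \<open>Writing t + n - 1 instead of t - 1 avoids truncated subtraction at t = 0.\<close>

definition run_start :: "nat \<Rightarrow> bool" where
  "run_start t \<longleftrightarrow> x (t + n - 1) \<noteq> x t"

text \<open>The increasing enumeration of all t with run_start t, cf. run_start_iff_in_range.\<close>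

definition start_pos :: "nat \<Rightarrow> nat" where
  "start_pos j = runs ! (j mod length runs) + n * (j div length runs)"

definition run_string :: "nat \<Rightarrow> nat \<Rightarrow> nat list" where
  "run_string j r = map (\<lambda>t. run_len n X ((j + t) mod length runs)) [0..<r]"

lemma x_periodic: "x (t + n) = x t"
  by (simp add: x_def)

lemma run_start_Suc: "run_start (Suc t) \<longleftrightarrow> x t \<noteq> x (Suc t)"
  using x_periodic[of t] by (simp add: run_start_def add.commute)

lemma run_start_periodic: "run_start (t + n) \<longleftrightarrow> run_start t"
proof -
  have "t + n + n - 1 = (t + n - 1) + n"
    using period_pos by simp
  then show ?thesis
    by (simp only: run_start_def x_periodic)
qed

lemma run_start_iff_mod: "run_start t \<longleftrightarrow> t mod n \<in> set runs"
proof -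
  have "(t + n - 1) mod n = (t + (n - 1)) mod n"
    using period_pos by simp
  also have "\<dots> = (t mod n + (n - 1)) mod n"
    by (simp add: mod_add_left_eq)
  also have "\<dots> = (t mod n + n - 1) mod n"
    using period_pos by simp
  finally have "(t + n - 1) mod n = (t mod n + n - 1) mod n" .
  then show ?thesis
    using period_pos by (simp add: run_start_def x_def set_run_starts)
qed

lemma start_pos_Suc:
  assumes "runs \<noteq> []"
  shows "start_pos (Suc j) = start_pos j + run_len n X (j mod length runs)"
proof -
  define m where "m = length runs"
  define a where "a = j mod m"
  have a: "a < m"
    using assms by (simp add: a_def m_def)
  have len: "run_len n X a = (runs ! ((a + 1) mod m) + n - runs ! a - 1) mod n + 1"
    by (simp add: run_len_def Let_def m_def)
  have lt_n: "runs ! i < n" if "i < m" for i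
    using run_starts_nth_less that by (simp add: m_def)
  have mono: "runs ! i < runs ! i'" if "i < i'" "i' < m" for i i'
    using sorted_run_starts[of n X] that by (simp add: sorted_wrt_iff_nth_less m_def)
  show ?thesis
  proof (cases "Suc a = m")
    case True
    then have j: "Suc j mod m = 0" "Suc j div m = Suc (j div m)"
      by (simp_all add: a_def mod_Suc div_Suc)
    have "runs ! 0 \<le> runs ! a"
      using mono[of 0 a] a by (cases a) auto
    then have "(runs ! 0 + n - runs ! a - 1) mod n = runs ! 0 + n - runs ! a - 1"
      using lt_n[OF a] by (intro mod_less) linarith
    then have "run_len n X a = runs ! 0 + n - runs ! a"
      using len True lt_n[OF a] by simp
    then show ?thesis
      using j lt_n[OF a] by (simp add: start_pos_def a_def m_def)
  next
    case False
    then have Suc_a: "Suc a < m"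
      using a by simp
    then have j: "Suc j mod m = Suc a" "Suc j div m = j div m"
      using False by (simp_all add: a_def mod_Suc div_Suc)
    have "runs ! a < runs ! Suc a"
      using mono Suc_a by simp
    have "runs ! Suc a + n - runs ! a - 1 = (runs ! Suc a - runs ! a - 1) + n"
      using \<open>runs ! a < runs ! Suc a\<close> by linarith
    then have "(runs ! Suc a + n - runs ! a - 1) mod n = (runs ! Suc a - runs ! a - 1) mod n"
      by (simp only: mod_add_self2)
    also have "\<dots> = runs ! Suc a - runs ! a - 1"
      using lt_n[OF Suc_a] by (intro mod_less) linarith
    finally have "run_len n X a = runs ! Suc a - runs ! a"
      using len Suc_a \<open>runs ! a < runs ! Suc a\<close> by simp
    then show ?thesis
      using j \<open>runs ! a < runs ! Suc a\<close> by (simp add: start_pos_def a_def m_def)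
  qed
qed

lemma start_pos_nth: "j < length runs \<Longrightarrow> start_pos j = runs ! j"
  by (simp add: start_pos_def)

lemma strict_mono_start_pos: "runs \<noteq> [] \<Longrightarrow> strict_mono start_pos"
  by (simp add: strict_mono_Suc_iff start_pos_Suc run_len_pos)

lemma run_start_iff_in_range:
  assumes "runs \<noteq> []"
  shows "run_start t \<longleftrightarrow> t \<in> range start_pos"
proof
  assume "run_start t"
  then obtain a where a: "a < length runs" "runs ! a = t mod n"
    by (auto simp: run_start_iff_mod in_set_conv_nth)
  moreover have "(a + length runs * (t div n)) div length runs = t div n"
    "(a + length runs * (t div n)) mod length runs = a"
    using a assms by simp_all
  ultimately have "start_pos (a + length runs * (t div n)) = t"
    by (simp add: start_pos_def)
  then show "t \<in> range start_pos"
    by (metis rangeI)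
next
  assume "t \<in> range start_pos"
  then obtain j where j: "t = start_pos j"
    by auto
  have "j mod length runs < length runs"
    using assms by simp
  then have "t mod n = runs ! (j mod length runs)" "runs ! (j mod length runs) \<in> set runs"
    using run_starts_nth_less by (auto simp: j start_pos_def)
  then show "run_start t"
    by (simp add: run_start_iff_mod)
qed

lemma start_pos_add_run_string:
  assumes "runs \<noteq> []"
  shows "start_pos (j + r) = start_pos j + sum_list (run_string j r)"
  by (induction r) (simp_all add: run_string_def start_pos_Suc[OF assms])

lemma length_run_string [simp]: "length (run_string j r) = r"
  by (simp add: run_string_def)

lemma nth_run_string:
  "t < r \<Longrightarrow> run_string j r ! t = run_len n X ((j + t) mod length runs)"
  by (simp add: run_string_def)

lemma run_count_eq_card_run_string:
  "run_count n X rs = card {j. j < length runs \<and> run_string j (length rs) = rs}"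
proof -
  have "(\<forall>t<length rs. run_len n X ((j + t) mod length runs) = rs ! t)
      \<longleftrightarrow> run_string j (length rs) = rs" for j
    by (simp add: list_eq_iff_nth_eq nth_run_string)
  then show ?thesis
    by (simp add: run_count_def)
qed

lemma card_run_starts_between:
  assumes "runs \<noteq> []" "j \<le> b"
  shows "card {t \<in> {start_pos j<..start_pos b}. run_start t} = b - j"
proof -
  have mono: "strict_mono start_pos"
    using strict_mono_start_pos[OF assms(1)] .
  have "{t \<in> {start_pos j<..start_pos b}. run_start t} = start_pos ` {j<..b}"
    using mono
    by (auto simp: run_start_iff_in_range[OF assms(1)] strict_mono_less strict_mono_less_eq)
  moreover have "inj start_pos"
    using mono strict_mono_imp_inj_on by blast
  ultimately show ?thesis
    by (simp add: card_image inj_on_subset)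
qed

lemma paut_eq_shifted_sum: "paut n X k = (\<Sum>i<n. x (i + a) * x (i + a + k))"
proof -
  have "paut n X k = (\<Sum>i<n. x i * x (i + k))"
    by (simp add: paut_def x_def)
  also have "\<dots> = (\<Sum>i<n. x (i + a) * x (i + a + k))"
  proof (rule sum_lessThan_periodic_shift[symmetric])
    fix t
    show "x (t + n) * x (t + n + k) = x t * x (t + k)"
      using x_periodic[of t] x_periodic[of "t + k"] by (simp add: add_ac)
  qed
  finally show ?thesis .
qed

end

locale pm1_sequence = periodic_sequence +
  assumes pm1: "pm1_seq n X"
begin

lemma x_pm1: "x t = 1 \<or> x t = -1"
  using pm1 period_pos by (simp add: pm1_seq_def x_def)

lemma x_mult_eq_sign: "x i * x (i + k) = (-1) ^ card {t \<in> {i<..i + k}. run_start t}"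
proof (induction k)
  case 0
  show ?case
    using x_pm1[of i] by auto
next
  case (Suc k)
  let ?S = "{t \<in> {i<..i + k}. run_start t}"
  have "x (i + Suc k) = (if run_start (i + Suc k) then - x (i + k) else x (i + k))"
    using run_start_Suc[of "i + k"] x_pm1[of "i + k"] x_pm1[of "i + Suc k"] by auto
  moreover have "{t \<in> {i<..i + Suc k}. run_start t}
      = (if run_start (i + Suc k) then insert (i + Suc k) ?S else ?S)"
    by (auto simp: le_Suc_eq)
  ultimately show ?case
    using Suc.IH by simp
qed

lemma x_start_pos_mult:
  assumes "runs \<noteq> []" "j \<le> b"
  shows "x (start_pos j) * x (start_pos b) = (-1) ^ (b - j)"
proof -
  have "start_pos j \<le> start_pos b"
    using strict_mono_start_pos[OF assms(1)] assms(2) by (simp add: strict_mono_less_eq)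
  then show ?thesis
    using x_mult_eq_sign[of "start_pos j" "start_pos b - start_pos j"]
      card_run_starts_between[OF assms] by simp
qed

lemma sum_compositions_matching_run_string:
  assumes "runs \<noteq> []" "0 < k"
  shows "(\<Sum>rs\<in>compositions k. (-1) ^ length rs * of_bool (run_string j (length rs) = rs))
    = (if run_start (start_pos j + k) then x (start_pos j) * x (start_pos j + k) else 0)"
proof -
  let ?M = "compositions k \<inter> {rs. run_string j (length rs) = rs}"
  have mono: "strict_mono start_pos"
    using strict_mono_start_pos[OF assms(1)] .
  have end_pos: "start_pos (j + length rs) = start_pos j + k" if "rs \<in> ?M" for rs
    using that start_pos_add_run_string[OF assms(1), of j "length rs"]
    by (auto simp: compositions_def)
  have "(\<Sum>rs\<in>compositions k. (-1::int) ^ length rs * of_bool (run_string j (length rs) = rs))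
      = (\<Sum>rs\<in>?M. (-1) ^ length rs)"
    by (rule sum_mult_of_bool_eq[OF finite_compositions])
  also have "\<dots> = (if run_start (start_pos j + k) then x (start_pos j) * x (start_pos j + k) else 0)"
  proof (cases "run_start (start_pos j + k)")
    case True
    then obtain b where b: "start_pos b = start_pos j + k"
      using run_start_iff_in_range[OF assms(1)] by (metis rangeE)
    then have "j < b"
      using mono assms(2) by (metis less_add_same_cancel1 strict_mono_less)
    have "?M = {run_string j (b - j)}"
    proof (intro equalityI subsetI)
      fix rs assume rs: "rs \<in> ?M"
      then have "length rs = b - j"
        using end_pos b strict_mono_eq[OF mono, of "j + length rs" b] by simp
      then show "rs \<in> {run_string j (b - j)}"
        using rs by simp
    next
      fix rs assume "rs \<in> {run_string j (b - j)}"
      then show "rs \<in> ?M"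
        using start_pos_add_run_string[OF assms(1), of j "b - j"] b \<open>j < b\<close>
        by (auto simp: compositions_def run_string_def run_len_pos)
    qed
    then have "(\<Sum>rs\<in>?M. (-1) ^ length rs) = (-1::int) ^ (b - j)"
      by simp
    also have "\<dots> = x (start_pos j) * x (start_pos j + k)"
      using x_start_pos_mult[OF assms(1), of j b] \<open>j < b\<close> by (simp add: b)
    finally show ?thesis
      unfolding if_P[OF True] .
  next
    case False
    have "?M = {}"
    proof (rule equals0I)
      fix rs assume "rs \<in> ?M"
      then have "start_pos j + k \<in> range start_pos"
        using end_pos by (intro range_eqI[of _ _ "j + length rs"]) simp
      then show False
        using False unfolding run_start_iff_in_range[OF assms(1)] by contradiction
    qed
    then show ?thesis
      using False by simp
  qed
  finally show ?thesis .
qed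

lemma alternating_run_count_sum_eq:
  assumes "0 < k"
  shows "(\<Sum>rs\<in>compositions k. (-1) ^ length rs * int (run_count n X rs))
    = (\<Sum>i<n. if run_start i \<and> run_start (i + k) then x i * x (i + k) else 0)"
proof (cases "runs = []")
  case True
  then show ?thesis
    by (simp add: run_count_eq_card_run_string run_start_iff_mod)
next
  case False
  define G where "G i = (if run_start i \<and> run_start (i + k) then x i * x (i + k) else 0)" for i
  have "int (run_count n X rs) = (\<Sum>j<length runs. of_bool (run_string j (length rs) = rs))"
    for rs :: "nat list"
  proof -
    have "{j. j < length runs \<and> run_string j (length rs) = rs}
        = {..<length runs} \<inter> {j. run_string j (length rs) = rs}"
      by auto
    then show ?thesis
      by (simp add: run_count_eq_card_run_string)
  qed
  then have "(\<Sum>rs\<in>compositions k. (-1) ^ length rs * int (run_count n X rs))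
      = (\<Sum>rs\<in>compositions k. \<Sum>j<length runs.
           (-1) ^ length rs * of_bool (run_string j (length rs) = rs))"
    by (simp only: sum_distrib_left)
  also have "\<dots> = (\<Sum>j<length runs. \<Sum>rs\<in>compositions k.
           (-1) ^ length rs * of_bool (run_string j (length rs) = rs))"
    by (rule sum.swap)
  also have "\<dots> = (\<Sum>j<length runs. G (runs ! j))"
  proof (rule sum.cong[OF refl])
    fix j assume "j \<in> {..<length runs}"
    then have "start_pos j = runs ! j"
      by (simp add: start_pos_nth)
    moreover have "run_start (start_pos j)"
      using run_start_iff_in_range[OF False] by simp
    ultimately show "(\<Sum>rs\<in>compositions k.
        (-1) ^ length rs * of_bool (run_string j (length rs) = rs)) = G (runs ! j)"
      using sum_compositions_matching_run_string[OF False assms, of j] by (simp add: G_def)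
  qed
  also have "\<dots> = (\<Sum>i\<in>set runs. G i)"
    by (rule sum.reindex_bij_betw[OF bij_betw_nth[OF distinct_run_starts refl refl]])
  also have "\<dots> = (\<Sum>i<n. G i)"
    by (rule sum.mono_neutral_left) (auto simp: G_def run_start_iff_mod set_run_starts)
  finally show ?thesis
    unfolding G_def .
qed

lemma second_difference_paut:
  assumes "0 < k"
  shows "4 * (\<Sum>i<n. if run_start i \<and> run_start (i + k) then x i * x (i + k) else 0)
    = 2 * paut n X k - paut n X (k + 1) - paut n X (k - 1)"
proof -
  define G where "G i = (if run_start i \<and> run_start (i + k) then x i * x (i + k) else 0)" for i
  have "G (t + n) = G t" for t
    using run_start_periodic[of t] run_start_periodic[of "t + k"] x_periodic[of t]
      x_periodic[of "t + k"] by (simp add: G_def add.commute add.left_commute)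
  then have "4 * (\<Sum>i<n. G i) = 4 * (\<Sum>i<n. G (i + 1))"
    using sum_lessThan_periodic_shift[of G n 1] by simp
  also have "\<dots> = (\<Sum>i<n. 4 * G (i + 1))"
    by (rule sum_distrib_left)
  also have "\<dots> = (\<Sum>i<n. (x i - x (i + 1)) * (x (i + k) - x (i + k + 1)))"
  proof (rule sum.cong[OF refl])
    fix i
    show "4 * G (i + 1) = (x i - x (i + 1)) * (x (i + k) - x (i + k + 1))"
      using run_start_Suc[of i] run_start_Suc[of "i + k"] x_pm1[of i] x_pm1[of "i + 1"]
        x_pm1[of "i + k"] x_pm1[of "i + k + 1"] by (auto simp: G_def)
  qed
  also have "\<dots> = (\<Sum>i<n. x i * x (i + k)) - (\<Sum>i<n. x i * x (i + (k + 1)))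
      - (\<Sum>i<n. x (i + 1) * x (i + k)) + (\<Sum>i<n. x (i + 1) * x (i + 1 + k))"
    by (simp add: algebra_simps sum_subtractf sum.distrib)
  also have "\<dots> = 2 * paut n X k - paut n X (k + 1) - paut n X (k - 1)"
    using paut_eq_shifted_sum[of k 0] paut_eq_shifted_sum[of "k + 1" 0]
      paut_eq_shifted_sum[of "k - 1" 1] paut_eq_shifted_sum[of k 1] assms by simp
  finally show ?thesis
    unfolding G_def .
qed

end

lemma four_alternating_run_count_sum:
  assumes "pm1_seq n X" "0 < n" "0 < k"
  shows "4 * (\<Sum>rs\<in>compositions k. (-1) ^ length rs * int (run_count n X rs))
    = 2 * paut n X k - paut n X (k + 1) - paut n X (k - 1)"
proof -
  interpret pm1_sequence n X
    using assms(1,2) by unfold_locales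
  show ?thesis
    using alternating_run_count_sum_eq[OF assms(3)] second_difference_paut[OF assms(3)] by simp
qed

lemma paut_0:
  assumes "pm1_seq n X"
  shows "paut n X 0 = int n"
proof -
  have "paut n X 0 = (\<Sum>i<n. 1)"
    unfolding paut_def using assms by (intro sum.cong) (auto simp: pm1_seq_def)
  then show ?thesis
    by simp
qed

lemma paut_1_eq_nruns:
  assumes "pm1_seq n X"
  shows "paut n X 1 = int n - 2 * int (nruns n X)"
proof -
  have "paut n X 1 = (\<Sum>i<n. 1 - 2 * of_bool (X i \<noteq> X ((i + 1) mod n)))"
    unfolding paut_def
  proof (rule sum.cong[OF refl])
    fix i assume "i \<in> {..<n}"
    then have "X i = 1 \<or> X i = -1" "X ((i + 1) mod n) = 1 \<or> X ((i + 1) mod n) = -1"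
      using assms by (simp_all add: pm1_seq_def)
    then show "X i * X ((i + 1) mod n) = 1 - 2 * of_bool (X i \<noteq> X ((i + 1) mod n))"
      by auto
  qed
  also have "\<dots> = int n - 2 * int (nruns n X)"
    by (simp add: sum_subtractf sum_distrib_left[symmetric] sum_of_bool_eq nruns_def
        lessThan_def Collect_conj_eq Int_commute)
  finally show ?thesis .
qed

lemma PComS_sum_paut:
  assumes "is_PComS n q c A" "k < n"
  shows "(\<Sum>i=1..q. paut n (A i) k) = (if k = 0 then int n * int q else c)"
  using assms by (auto simp: is_PComS_def paut_0)

lemma PComS_pm1_seq: "is_PComS n q c A \<Longrightarrow> i \<in> {1..q} \<Longrightarrow> pm1_seq n (A i)"
  by (simp add: is_PComS_def)

lemma PComS_sum_nruns:
  assumes "is_PComS n q c A" "2 \<le> n"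
  shows "2 * int (\<Sum>i=1..q. nruns n (A i)) = int n * int q - c"
proof -
  have "2 * int (\<Sum>i=1..q. nruns n (A i)) = (\<Sum>i=1..q. 2 * int (nruns n (A i)))"
    by (simp add: sum_distrib_left)
  also have "\<dots> = (\<Sum>i=1..q. int n - paut n (A i) 1)"
  proof (rule sum.cong[OF refl])
    fix i assume "i \<in> {1..q}"
    then show "2 * int (nruns n (A i)) = int n - paut n (A i) 1"
      using paut_1_eq_nruns[OF PComS_pm1_seq[OF assms(1)]] by simp
  qed
  finally show ?thesis
    using PComS_sum_paut[OF assms(1), of 1] assms(2) by (simp add: sum_subtractf)
qed

lemma PComS_alternating_run_count_sum:
  assumes "is_PComS n q c A" "0 < k" "k + 1 < n"
  shows "4 * (\<Sum>i=1..q. \<Sum>rs\<in>compositions k. (-1) ^ length rs * int (run_count n (A i) rs))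
    = (if k = 1 then c - int n * int q else 0)"
proof -
  let ?S = "\<lambda>k. \<Sum>i=1..q. paut n (A i) k"
  have "4 * (\<Sum>i=1..q. \<Sum>rs\<in>compositions k. (-1) ^ length rs * int (run_count n (A i) rs))
      = (\<Sum>i=1..q. 4 * (\<Sum>rs\<in>compositions k. (-1) ^ length rs * int (run_count n (A i) rs)))"
    by (simp add: sum_distrib_left)
  also have "\<dots> = (\<Sum>i=1..q. 2 * paut n (A i) k - paut n (A i) (k + 1) - paut n (A i) (k - 1))"
  proof (rule sum.cong[OF refl])
    fix i assume "i \<in> {1..q}"
    then show "4 * (\<Sum>rs\<in>compositions k. (-1) ^ length rs * int (run_count n (A i) rs))
        = 2 * paut n (A i) k - paut n (A i) (k + 1) - paut n (A i) (k - 1)"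
      using four_alternating_run_count_sum[OF PComS_pm1_seq[OF assms(1)]] assms(2,3) by simp
  qed
  also have "\<dots> = 2 * ?S k - ?S (k + 1) - ?S (k - 1)"
    by (simp add: sum_subtractf sum_distrib_left)
  finally show ?thesis
    using PComS_sum_paut[OF assms(1)] assms(2,3) by simp
qed

theorem theorem7:
  fixes n q :: nat and c :: int and A :: "nat \<Rightarrow> nat \<Rightarrow> int"
  assumes "3 \<le> n"
    and "is_PComS n q c A"
  shows "real (\<Sum>i=1..q. nruns n (A i)) = (real n * real q - of_int c) / 2 \<and>
         real (\<Sum>i=1..q. run_count n (A i) [1]) = (real n * real q - of_int c) / 4 \<and>
         (\<forall>k. 2 \<le> k \<and> k \<le> n - 2 \<longrightarrow>
           int (\<Sum>i=1..q. run_count n (A i) [k]) =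
           (\<Sum>i=1..q. \<Sum>rs\<in>compositions_ge2 k. (-1) ^ length rs * int (run_count n (A i) rs)))"
proof -
  have runs_int: "2 * int (\<Sum>i=1..q. nruns n (A i)) = int n * int q - c"
    using PComS_sum_nruns[OF assms(2)] assms(1) by simp
  have runs: "2 * real (\<Sum>i=1..q. nruns n (A i)) = real n * real q - of_int c"
    using arg_cong[where f = real_of_int, OF runs_int] by simp
  have singletons_int: "4 * int (\<Sum>i=1..q. run_count n (A i) [1]) = int n * int q - c"
    using PComS_alternating_run_count_sum[OF assms(2), of 1] assms(1)
    unfolding compositions_1 by (simp add: sum_negf)
  have singletons: "4 * real (\<Sum>i=1..q. run_count n (A i) [1]) = real n * real q - of_int c"
    using arg_cong[where f = real_of_int, OF singletons_int] by simp
  have "int (\<Sum>i=1..q. run_count n (A i) [k]) =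
      (\<Sum>i=1..q. \<Sum>rs\<in>compositions_ge2 k. (-1) ^ length rs * int (run_count n (A i) rs))"
    if "2 \<le> k" "k \<le> n - 2" for k
  proof -
    have "k + 1 < n"
      using that assms(1) by linarith
    then show ?thesis
      using PComS_alternating_run_count_sum[OF assms(2), of k] that(1)
      by (simp add: compositions_eq_insert_ge2 finite_compositions_ge2
          singleton_notin_compositions_ge2 sum_subtractf)
  qed
  then show ?thesis
    using runs singletons by auto
qed

end
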